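(* Let $S$ be a numerical semigroup with conductor $c$, enumerated as $S=\{0=\rho_1<\rho_2<\cdots\}$, and let $m\ge 2c-1$. Let $M=\{m_1<\cdots<m_r\}\subseteq S$ be an $(S,m,r)$-amenable set. Then (a) $m_i\le m+\rho_i$ for all $i\in\{1,\ldots,r\}$, and (b) $m_{i+1}-m_i\le\rho_2$ for all $i\in\{1,\ldots,r-1\}$.
   Context: A numerical semigroup is a submonoid of $\mathbb N$ with finite complement; its conductor $c$ is the least element of $S$ such that $c+n\in S$ for all $n\in\mathbb N$. For $x\in S$, $\mathrm D(x)=\{\alpha\in S\mid x-\alpha\in S\}$. A set $M=\{m_1<\cdots<m_r\}\subseteq S$ with $2c-1\le m=m_1$ is $(S,m,r)$-amenable if $\mathrm D(m_i)\cap[m,\infty)\subseteq M$ for all $i\in\{1,\ldots,r\}$. *)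

theory Defs
  imports Main "HOL-Library.Infinite_Set"
begin

definition numerical_semigroup :: "nat set \<Rightarrow> bool" where
  "numerical_semigroup S \<longleftrightarrow> 0 \<in> S \<and> (\<forall>a\<in>S. \<forall>b\<in>S. a + b \<in> S) \<and> finite (UNIV - S)"

definition conductor :: "nat set \<Rightarrow> nat" where
  "conductor S = (LEAST c. c \<in> S \<and> (\<forall>n. c + n \<in> S))"

text \<open>D(x) = {alpha in S | x - alpha in S}; subtraction is taken in the integers, hence alpha <= x.\<close>
definition Dset :: "nat set \<Rightarrow> nat \<Rightarrow> nat set" where
  "Dset S x = {\<alpha> \<in> S. \<alpha> \<le> x \<and> x - \<alpha> \<in> S}"

definition rho :: "nat set \<Rightarrow> nat \<Rightarrow> nat" where
  "rho S i = enumerate S (i - 1)"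

definition melem :: "nat set \<Rightarrow> nat \<Rightarrow> nat" where
  "melem M i = sorted_list_of_set M ! (i - 1)"

text \<open>(S,m,r)-amenable: M = {m_1 < ... < m_r} subset of S, with 2c-1 <= m = m_1
  (2c-1 <= m written as 2c <= m+1 to avoid truncated subtraction).\<close>
definition amenable :: "nat set \<Rightarrow> nat \<Rightarrow> nat \<Rightarrow> nat set \<Rightarrow> bool" where
  "amenable S m r M \<longleftrightarrow> M \<subseteq> S \<and> finite M \<and> card M = r \<and> M \<noteq> {} \<and> Min M = m
     \<and> 2 * conductor S \<le> m + 1
     \<and> (\<forall>x\<in>M. Dset S x \<inter> {m..} \<subseteq> M)"

end

theory Submission
  imports Defs
begin

text \<open>Since \<open>m \<ge> c\<close>, an element \<open>x \<in> M\<close> with \<open>x \<ge> m + \<alpha>\<close> for some \<open>\<alpha> \<in> S\<close> has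
  \<open>x - \<alpha> \<in> D(x) \<inter> [m, \<infinity>)\<close>, so amenability gives \<open>x - \<alpha> \<in> M\<close>.
  (a) If \<open>m\<^sub>i > m + \<rho>\<^sub>i\<close>, then \<open>m\<^sub>i - \<rho>\<^sub>1 > \<dots> > m\<^sub>i - \<rho>\<^sub>i > m\<close> together with \<open>m\<close>
  are \<open>i + 1\<close> elements of \<open>M\<close> not exceeding \<open>m\<^sub>i\<close>, which is absurd.
  (b) Either \<open>m\<^sub>i\<^sub>+\<^sub>1 < m + \<rho>\<^sub>2\<close>, and then \<open>m\<^sub>i\<^sub>+\<^sub>1 - m\<^sub>i \<le> m\<^sub>i\<^sub>+\<^sub>1 - m < \<rho>\<^sub>2\<close>, or
  \<open>m\<^sub>i\<^sub>+\<^sub>1 - \<rho>\<^sub>2\<close> is an element of \<open>M\<close> below \<open>m\<^sub>i\<^sub>+\<^sub>1\<close>, hence at most \<open>m\<^sub>i\<close>.\<close>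

lemma numerical_semigroup_infinite:
  assumes "numerical_semigroup S"
  shows "infinite S"
proof -
  have "infinite (UNIV - (UNIV - S))"
    using assms by (intro Diff_infinite_finite) (simp_all add: numerical_semigroup_def)
  then show ?thesis
    by (simp add: Diff_Diff_Int)
qed

lemma conductor_le_imp_mem:
  assumes "numerical_semigroup S" and "conductor S \<le> x"
  shows "x \<in> S"
proof -
  have "finite (UNIV - S)"
    using assms(1) unfolding numerical_semigroup_def by blast
  then obtain B where B: "\<forall>y\<in>UNIV - S. y \<le> B"
    by (auto simp: finite_nat_set_iff_bounded_le)
  then have "y \<in> S" if "B < y" for y
    using that leD by blast
  then have "\<forall>n. Suc B + n \<in> S"
    by simp
  then have "\<exists>c. c \<in> S \<and> (\<forall>n. c + n \<in> S)"
    by (metis add_0_right)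
  then have "\<forall>n. conductor S + n \<in> S"
    unfolding conductor_def by (rule LeastI2_ex) blast
  then have "conductor S + (x - conductor S) \<in> S" ..
  then show ?thesis
    using assms(2) by simp
qed

lemma amenable_Min:
  assumes "amenable S m r M" and "y \<in> M"
  shows "m \<in> M" and "m \<le> y"
  using assms Min_in Min_le unfolding amenable_def by blast+

lemma amenable_diff_mem:
  assumes "numerical_semigroup S" and "amenable S m r M"
    and "x \<in> M" and "\<alpha> \<in> S" and "\<alpha> + m \<le> x"
  shows "x - \<alpha> \<in> M"
proof -
  have "conductor S \<le> x - \<alpha>"
    using assms(2,5) unfolding amenable_def by linarith
  then have "x - \<alpha> \<in> Dset S x \<inter> {m..}"
    using conductor_le_imp_mem[OF assms(1)] assms(4,5) unfolding Dset_def by auto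
  then show ?thesis
    using assms(2,3) unfolding amenable_def by blast
qed

lemma nth_sorted_list_of_set_mem:
  assumes "finite M" and "k < card M"
  shows "sorted_list_of_set M ! k \<in> M"
  using assms by (metis nth_mem length_sorted_list_of_set set_sorted_list_of_set)

lemma nth_sorted_list_of_set_less_iff:
  assumes "finite M" and "j < card M" and "k < card M"
  shows "sorted_list_of_set M ! j < sorted_list_of_set M ! k \<longleftrightarrow> j < k"
  using assms strict_sorted_list_of_set[of M] sorted_wrt_nth_less[where P = "(<)"]
  by (metis length_sorted_list_of_set linorder_neqE_nat order_less_asym)

lemma card_Collect_le_nth_sorted_list_of_set:
  assumes "finite M" and "k < card M"
  shows "card {y \<in> M. y \<le> sorted_list_of_set M ! k} = Suc k"
proof -
  let ?L = "sorted_list_of_set M"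
  have "{y \<in> M. y \<le> ?L ! k} = (!) ?L ` {..k}"
  proof (intro equalityI subsetI)
    fix y assume "y \<in> {y \<in> M. y \<le> ?L ! k}"
    then obtain j where "j < card M" "y = ?L ! j" "\<not> ?L ! k < ?L ! j"
      using assms(1) by (metis in_set_conv_nth length_sorted_list_of_set
        set_sorted_list_of_set leD mem_Collect_eq)
    then show "y \<in> (!) ?L ` {..k}"
      using nth_sorted_list_of_set_less_iff[OF assms(1) assms(2)] by (auto simp: not_less)
  next
    fix y assume "y \<in> (!) ?L ` {..k}"
    then obtain j where j: "j \<le> k" "y = ?L ! j" by blast
    then have "?L ! j \<in> M"
      using assms by (simp add: nth_sorted_list_of_set_mem)
    moreover have "\<not> ?L ! k < ?L ! j"
      using j(1) assms nth_sorted_list_of_set_less_iff[OF assms(1), of k j] by simp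
    ultimately show "y \<in> {y \<in> M. y \<le> ?L ! k}"
      using j(2) by simp
  qed
  moreover have "inj_on ((!) ?L) {..k}"
    using assms by (auto simp: inj_on_def nth_eq_iff_index_eq)
  ultimately show ?thesis
    by (simp add: card_image)
qed

lemma amenable_melem_le:
  assumes "numerical_semigroup S" and "amenable S m r M" and "1 \<le> i" and "i \<le> r"
  shows "melem M i \<le> m + rho S i"
proof (rule ccontr)
  define x where "x = melem M i"
  assume "\<not> x \<le> m + rho S i"
  then have big: "m + enumerate S (i - 1) < x"
    by (simp add: rho_def)
  have fin: "finite M" and card: "card M = r"
    using assms(2) unfolding amenable_def by auto
  have inf: "infinite S"
    using numerical_semigroup_infinite[OF assms(1)] .
  have x: "x \<in> M"
    using assms(3,4) fin card by (simp add: x_def melem_def nth_sorted_list_of_set_mem)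
  have small: "enumerate S j + m < x" if "j < i" for j
  proof -
    have "enumerate S j \<le> enumerate S (i - 1)"
      using that inf by simp
    then show ?thesis
      using big by linarith
  qed
  define A where "A = insert m ((\<lambda>j. x - enumerate S j) ` {..<i})"
  have "inj_on (\<lambda>j. x - enumerate S j) {..<i}"
  proof (rule inj_onI)
    fix a b assume "a \<in> {..<i}" "b \<in> {..<i}" "x - enumerate S a = x - enumerate S b"
    then have "enumerate S a = enumerate S b"
      using small[of a] small[of b] by simp
    then show "a = b"
      using inf by (metis enumerate_mono_le_iff order_antisym order_refl)
  qed
  moreover have "m \<notin> (\<lambda>j. x - enumerate S j) ` {..<i}"
    using small by force
  ultimately have "card A = Suc i"
    by (simp add: A_def card_image)
  moreover have "A \<subseteq> {y \<in> M. y \<le> x}"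
  proof -
    have "x - enumerate S j \<in> M" if "j < i" for j
      using amenable_diff_mem[OF assms(1,2) x enumerate_in_set[OF inf]] small[OF that] by simp
    then show ?thesis
      using amenable_Min(1)[OF assms(2) x] big by (auto simp: A_def)
  qed
  then have "card A \<le> i"
    using card_mono[of "{y \<in> M. y \<le> x}" A] card_Collect_le_nth_sorted_list_of_set[of M "i - 1"]
      fin card assms(3,4) by (simp add: x_def melem_def)
  ultimately show False
    by simp
qed

lemma amenable_melem_gap:
  assumes "numerical_semigroup S" and "amenable S m r M" and "1 \<le> i" and "i < r"
  shows "melem M (i + 1) - melem M i \<le> rho S 2"
proof -
  define x where "x = melem M (i + 1)"
  define y where "y = melem M i"
  have fin: "finite M" and card: "card M = r"
    using assms(2) unfolding amenable_def by auto
  have inf: "infinite S"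
    using numerical_semigroup_infinite[OF assms(1)] .
  have x: "x \<in> M" and y: "y \<in> M"
    using assms(3,4) fin card by (simp_all add: x_def y_def melem_def nth_sorted_list_of_set_mem)
  have "x - y \<le> enumerate S 1"
  proof (cases "enumerate S 1 + m \<le> x")
    case True
    have "x - enumerate S 1 \<in> M"
      using amenable_diff_mem[OF assms(1,2) x enumerate_in_set[OF inf] True] .
    then obtain j where j: "j < r" "x - enumerate S 1 = sorted_list_of_set M ! j"
      using fin card by (metis in_set_conv_nth length_sorted_list_of_set set_sorted_list_of_set)
    have "0 < enumerate S 1"
      using enumerate_mono[OF zero_less_one inf] by simp
    then have "sorted_list_of_set M ! j < sorted_list_of_set M ! i"
      using True j(2) by (simp add: x_def melem_def)
    then have "j \<le> i - 1"
      using j(1) assms(4) nth_sorted_list_of_set_less_iff[OF fin] card by auto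
    then have "sorted_list_of_set M ! j \<le> y"
      using j(1) assms(3,4) nth_sorted_list_of_set_less_iff[OF fin, of "i - 1" j] card
      by (auto simp: y_def melem_def not_less[symmetric])
    then show ?thesis
      using j(2) by linarith
  next
    case False
    then show ?thesis
      using amenable_Min(2)[OF assms(2) y] by linarith
  qed
  then show ?thesis
    by (simp add: x_def y_def rho_def)
qed

theorem proposition3p8:
  fixes S M :: "nat set" and m r :: nat
  assumes "numerical_semigroup S"
    and "2 * conductor S \<le> m + 1"
    and "amenable S m r M"
  shows "(\<forall>i\<in>{1..r}. melem M i \<le> m + rho S i)
       \<and> (\<forall>i\<in>{1..r-1}. melem M (i + 1) - melem M i \<le> rho S 2)"
  \<comment> \<open>the bound \<open>2c - 1 \<le> m\<close> is also part of \<open>amenable\<close>\<close>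
  using amenable_melem_le[OF assms(1,3)] amenable_melem_gap[OF assms(1,3)] by auto

end
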